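(* Every LTL-satisfiable $\mathrm{THT}^{1}(\mathsf X,\mathsf R)$ formula has a minimal LTL model. Likewise, every LTL-satisfiable $\mathrm{THT}_1$ formula has a minimal LTL model.
   Context: Fix a finite set $P$ of atomic propositions. Formulas over $P$: $\varphi ::= p \mid \bot \mid \varphi\vee\varphi \mid \varphi\wedge\varphi \mid \varphi\rightarrow\varphi \mid \mathsf{X}\varphi \mid \varphi\,\mathsf{U}\,\varphi \mid \varphi\,\mathsf{R}\,\varphi$, with $\neg\varphi:=\varphi\rightarrow\bot$, and the modalities $\mathsf F\varphi$ and $\mathsf G\varphi$ with the meaning of $\top\mathsf U\varphi$ and $\bot\mathsf R\varphi$. An LTL interpretation is an infinite word $T$ over $2^P$. $T\models_{LTL}\varphi$ denotes standard LTL satisfaction at position $0$ (classical implication). A formula is LTL-satisfiable if it has an LTL model. For LTL interpretations, $H\sqsubset T$ means $H(i)\subseteq T(i)$ for all $i$ and $H\ne T$. A minimal LTL model of $\varphi$ is an LTL model $T$ of $\varphi$ such that no $H\sqsubset T$ satisfies $H\models_{LTL}\varphi$. $\mathrm{THT}^{1}(\mathsf X,\mathsf R)$ is the set of formulas whose only temporal modalities are $\mathsf X$ and $\mathsf R$ and whose implication height (maximal nesting of $\rightarrow$, with negation counting as an implication) is at most $1$. $\mathrm{THT}_1$ is the set of formulas (all modalities $\mathsf X,\mathsf U,\mathsf R,\mathsf F,\mathsf G$ allowed) with no nesting of temporal modalities. *)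

theory Defs
  imports Main
begin

text \<open>Temporal formulas over atoms of type 'a (the finite set P is the finite type 'a).\<close>
datatype 'a tform =
    Atom 'a
  | Bot
  | Or "'a tform" "'a tform"
  | And "'a tform" "'a tform"
  | Imp "'a tform" "'a tform"
  | Next "'a tform"
  | Until "'a tform" "'a tform"
  | Release "'a tform" "'a tform"

definition Neg :: "'a tform \<Rightarrow> 'a tform" where "Neg \<phi> = Imp \<phi> Bot"
definition Top :: "'a tform" where "Top = Imp Bot Bot"
definition Fin :: "'a tform \<Rightarrow> 'a tform" where "Fin \<phi> = Until Top \<phi>"
definition Glob :: "'a tform \<Rightarrow> 'a tform" where "Glob \<phi> = Release Bot \<phi>"

type_synonym 'a interp = "nat \<Rightarrow> 'a set"

fun ltl_sat :: "'a interp \<Rightarrow> nat \<Rightarrow> 'a tform \<Rightarrow> bool" where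
  "ltl_sat T i (Atom p) = (p \<in> T i)"
| "ltl_sat T i Bot = False"
| "ltl_sat T i (Or \<phi> \<psi>) = (ltl_sat T i \<phi> \<or> ltl_sat T i \<psi>)"
| "ltl_sat T i (And \<phi> \<psi>) = (ltl_sat T i \<phi> \<and> ltl_sat T i \<psi>)"
| "ltl_sat T i (Imp \<phi> \<psi>) = (ltl_sat T i \<phi> \<longrightarrow> ltl_sat T i \<psi>)"
| "ltl_sat T i (Next \<phi>) = ltl_sat T (Suc i) \<phi>"
| "ltl_sat T i (Until \<phi> \<psi>) =
     (\<exists>j\<ge>i. ltl_sat T j \<psi> \<and> (\<forall>k. i \<le> k \<and> k < j \<longrightarrow> ltl_sat T k \<phi>))"
| "ltl_sat T i (Release \<phi> \<psi>) =
     (\<forall>j\<ge>i. ltl_sat T j \<psi> \<or> (\<exists>k. i \<le> k \<and> k < j \<and> ltl_sat T k \<phi>))"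

definition ltl_model :: "'a interp \<Rightarrow> 'a tform \<Rightarrow> bool" where
  "ltl_model T \<phi> = ltl_sat T 0 \<phi>"

definition ltl_satisfiable :: "'a tform \<Rightarrow> bool" where
  "ltl_satisfiable \<phi> = (\<exists>T. ltl_model T \<phi>)"

definition strictly_below :: "'a interp \<Rightarrow> 'a interp \<Rightarrow> bool" where
  "strictly_below H T = ((\<forall>i. H i \<subseteq> T i) \<and> H \<noteq> T)"

definition minimal_ltl_model :: "'a interp \<Rightarrow> 'a tform \<Rightarrow> bool" where
  "minimal_ltl_model T \<phi> =
     (ltl_model T \<phi> \<and> \<not> (\<exists>H. strictly_below H T \<and> ltl_model H \<phi>))"

text \<open>Implication height (negation counts as an implication, since Neg is Imp _ Bot).\<close>
fun imp_height :: "'a tform \<Rightarrow> nat" where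
  "imp_height (Atom p) = 0"
| "imp_height Bot = 0"
| "imp_height (Or \<phi> \<psi>) = max (imp_height \<phi>) (imp_height \<psi>)"
| "imp_height (And \<phi> \<psi>) = max (imp_height \<phi>) (imp_height \<psi>)"
| "imp_height (Imp \<phi> \<psi>) = Suc (max (imp_height \<phi>) (imp_height \<psi>))"
| "imp_height (Next \<phi>) = imp_height \<phi>"
| "imp_height (Until \<phi> \<psi>) = max (imp_height \<phi>) (imp_height \<psi>)"
| "imp_height (Release \<phi> \<psi>) = max (imp_height \<phi>) (imp_height \<psi>)"

fun only_X_R :: "'a tform \<Rightarrow> bool" where
  "only_X_R (Atom p) = True"
| "only_X_R Bot = True"
| "only_X_R (Or \<phi> \<psi>) = (only_X_R \<phi> \<and> only_X_R \<psi>)"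
| "only_X_R (And \<phi> \<psi>) = (only_X_R \<phi> \<and> only_X_R \<psi>)"
| "only_X_R (Imp \<phi> \<psi>) = (only_X_R \<phi> \<and> only_X_R \<psi>)"
| "only_X_R (Next \<phi>) = only_X_R \<phi>"
| "only_X_R (Until \<phi> \<psi>) = False"
| "only_X_R (Release \<phi> \<psi>) = (only_X_R \<phi> \<and> only_X_R \<psi>)"

definition THT1_XR :: "'a tform set" where
  "THT1_XR = {\<phi>. only_X_R \<phi> \<and> imp_height \<phi> \<le> 1}"

fun temp_depth :: "'a tform \<Rightarrow> nat" where
  "temp_depth (Atom p) = 0"
| "temp_depth Bot = 0"
| "temp_depth (Or \<phi> \<psi>) = max (temp_depth \<phi>) (temp_depth \<psi>)"
| "temp_depth (And \<phi> \<psi>) = max (temp_depth \<phi>) (temp_depth \<psi>)"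
| "temp_depth (Imp \<phi> \<psi>) = max (temp_depth \<phi>) (temp_depth \<psi>)"
| "temp_depth (Next \<phi>) = Suc (temp_depth \<phi>)"
| "temp_depth (Until \<phi> \<psi>) = Suc (max (temp_depth \<phi>) (temp_depth \<psi>))"
| "temp_depth (Release \<phi> \<psi>) = Suc (max (temp_depth \<phi>) (temp_depth \<psi>))"

definition THT_1 :: "'a tform set" where
  "THT_1 = {\<phi>. temp_depth \<phi> \<le> 1}"

end

theory Submission
  imports Defs
begin

text \<open>
  For \<open>THT\<^sup>1(X,R)\<close> the set of models is closed under pointwise limits of descending,
  eventually stabilising sequences: antecedents of implications are implication-free and hence
  monotone, and a formula holding infinitely often along the sequence then holds in the limit.
  Building the sequence greedily, at stage \<open>i\<close> shrinking the letter at position \<open>i\<close> as much as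
  possible among models that agree with the current one before \<open>i\<close>, the limit is a minimal model.

  For \<open>THT\<^sub>1\<close> a formula without nested modalities only sees the profile of an interpretation:
  its first two letters and the order in which letters first occur. There are finitely many
  profiles, and below every interpretation lies one that is minimal within its profile class
  (minimise the sum of first-occurrence positions, then make every repeated letter minimal among
  earlier letters). Induction on the number of profiles realised by models yields a minimal model.
\<close>

section \<open>Limits of descending sequences\<close>

lemma ltl_sat_mono:
  assumes "imp_height \<psi> = 0" and "H \<le> G" and "ltl_sat H i \<psi>"
  shows "ltl_sat G i \<psi>"
  using assms(1,3)
proof (induction \<psi> arbitrary: i)
  case (Atom p)
  then show ?case using \<open>H \<le> G\<close> by (auto simp: le_fun_def)
next
  case (Until \<psi>1 \<psi>2)
  then show ?case by (simp only: ltl_sat.simps imp_height.simps max_nat.eq_neutr_iff) blast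
next
  case (Release \<psi>1 \<psi>2)
  then show ?case by (simp only: ltl_sat.simps imp_height.simps max_nat.eq_neutr_iff) blast
qed auto

lemma ltl_sat_limit:
  assumes "only_X_R \<psi>" and "imp_height \<psi> \<le> 1"
    and below: "\<And>n. L \<le> H n"
    and stable: "\<And>i. \<forall>\<^sub>F n in sequentially. H n i = L i"
    and "\<exists>\<^sub>F n in sequentially. ltl_sat (H n) i \<psi>"
  shows "ltl_sat L i \<psi>"
  using assms(1,2,5)
proof (induction \<psi> arbitrary: i)
  case (Atom p)
  have "\<exists>\<^sub>F n in sequentially. p \<in> H n i \<and> H n i = L i"
    using Atom.prems(3) stable by (simp add: frequently_eventually_frequently)
  then show ?case by (auto dest: frequently_ex)
next
  case (Or \<psi>1 \<psi>2)
  then show ?case by (auto simp: frequently_disj_iff)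
next
  case (And \<psi>1 \<psi>2)
  then have "\<exists>\<^sub>F n in sequentially. ltl_sat (H n) i \<psi>1" "\<exists>\<^sub>F n in sequentially. ltl_sat (H n) i \<psi>2"
    by (auto elim: frequently_elim1)
  with And show ?case by simp
next
  case (Imp \<psi>1 \<psi>2)
  show ?case unfolding ltl_sat.simps
  proof
    \<comment> \<open>The antecedent is implication-free, so it holds all along the sequence once it holds in the limit.\<close>
    assume "ltl_sat L i \<psi>1"
    then have "ltl_sat (H n) i \<psi>1" for n
      using ltl_sat_mono[OF _ below] Imp.prems(2) by simp
    then have "\<exists>\<^sub>F n in sequentially. ltl_sat (H n) i \<psi>2"
      using Imp.prems(3) by (auto elim: frequently_elim1)
    then show "ltl_sat L i \<psi>2" using Imp.IH(2) Imp.prems by simp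
  qed
next
  case (Release \<psi>1 \<psi>2)
  show ?case unfolding ltl_sat.simps
  proof (intro allI impI)
    fix j assume "i \<le> j"
    have "\<exists>\<^sub>F n in sequentially. ltl_sat (H n) j \<psi>2 \<or> (\<exists>k\<in>{i..<j}. ltl_sat (H n) k \<psi>1)"
      using Release.prems(3) \<open>i \<le> j\<close> by (auto elim!: frequently_elim1)
    then have "(\<exists>\<^sub>F n in sequentially. ltl_sat (H n) j \<psi>2) \<or>
        (\<exists>k\<in>{i..<j}. \<exists>\<^sub>F n in sequentially. ltl_sat (H n) k \<psi>1)"
      by (simp add: frequently_disj_iff frequently_bex_finite_distrib)
    then show "ltl_sat L j \<psi>2 \<or> (\<exists>k. i \<le> k \<and> k < j \<and> ltl_sat L k \<psi>1)"
      using Release.IH Release.prems by auto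
  qed
qed simp_all

definition limit_closed :: "'a interp set \<Rightarrow> bool" where
  "limit_closed M \<longleftrightarrow> (\<forall>H L. range H \<subseteq> M \<longrightarrow> (\<forall>n. L \<le> H n) \<longrightarrow>
     (\<forall>i. \<forall>\<^sub>F n in sequentially. H n i = L i) \<longrightarrow> L \<in> M)"

lemma limit_closed_models_THT1_XR:
  assumes "\<phi> \<in> THT1_XR"
  shows "limit_closed {T. ltl_model T \<phi>}"
  unfolding limit_closed_def
proof (intro allI impI)
  fix H :: "nat \<Rightarrow> 'a interp" and L
  assume models: "range H \<subseteq> {T. ltl_model T \<phi>}" and below: "\<forall>n. L \<le> H n"
    and stable: "\<forall>i. \<forall>\<^sub>F n in sequentially. H n i = L i"
  have "\<exists>\<^sub>F n in sequentially. ltl_sat (H n) 0 \<phi>"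
    using models by (auto simp: ltl_model_def frequently_sequentially)
  then show "L \<in> {T. ltl_model T \<phi>}"
    using ltl_sat_limit[of \<phi> L H 0] assms below stable by (simp add: THT1_XR_def ltl_model_def)
qed

lemma ex_greedy_refinement:
  assumes "H \<in> M"
  shows "\<exists>H'\<in>M. H' \<le> H \<and> (\<forall>k<i. H' k = H k) \<and>
    (\<forall>G\<in>M. G \<le> H \<longrightarrow> (\<forall>k<i. G k = H k) \<longrightarrow> card (H' i) \<le> card (G i))"
  using ex_has_least_nat[of "\<lambda>G. G \<in> M \<and> G \<le> H \<and> (\<forall>k<i. G k = H k)" H "\<lambda>G. card (G i)"] assms
  by auto

lemma ex_greedy_sequence:
  assumes "T \<in> M"
  obtains S where "\<And>n. S n \<in> M" and "\<And>n. S (Suc n) \<le> S n"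
    and "\<And>n k. k < n \<Longrightarrow> S (Suc n) k = S n k"
    and "\<And>n G. G \<in> M \<Longrightarrow> G \<le> S n \<Longrightarrow> (\<forall>k<n. G k = S n k) \<Longrightarrow> card (S (Suc n) n) \<le> card (G n)"
proof -
  define greedy where "greedy i H H' \<longleftrightarrow> H' \<in> M \<and> H' \<le> H \<and> (\<forall>k<i. H' k = H k) \<and>
    (\<forall>G\<in>M. G \<le> H \<longrightarrow> (\<forall>k<i. G k = H k) \<longrightarrow> card (H' i) \<le> card (G i))" for i H H'
  define step where "step i H = (SOME H'. greedy i H H')" for i H
  have step: "greedy i H (step i H)" if "H \<in> M" for i H
    unfolding step_def greedy_def using ex_greedy_refinement[OF that, of i] by (rule someI2_bex) blast
  define S where "S n = rec_nat T step n" for n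
  have S_Suc: "S (Suc n) = step n (S n)" for n by (simp add: S_def)
  have S_in: "S n \<in> M" for n
    by (induction n) (simp_all add: S_def assms step[unfolded greedy_def])
  show thesis
    by (rule that[of S]) (use S_in step[OF S_in] in \<open>simp_all add: S_Suc greedy_def\<close>)
qed

lemma ex_minimal_if_limit_closed:
  fixes T :: "'a::finite interp"
  assumes "limit_closed M" and "T \<in> M"
  shows "\<exists>u\<in>M. \<not> (\<exists>v\<in>M. v < u)"
proof -
  obtain S where S_in: "\<And>n. S n \<in> M" and S_Suc_le: "\<And>n. S (Suc n) \<le> S n"
    and S_Suc_agree: "\<And>n k. k < n \<Longrightarrow> S (Suc n) k = S n k"
    and S_least: "\<And>n G. G \<in> M \<Longrightarrow> G \<le> S n \<Longrightarrow> (\<forall>k<n. G k = S n k) \<Longrightarrow> card (S (Suc n) n) \<le> card (G n)"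
    using ex_greedy_sequence[OF assms(2)] by blast
  define L where "L i = S (Suc i) i" for i
  have S_stable: "S n i = L i" if "Suc i \<le> n" for i n
    using that by (induction n rule: dec_induct) (simp_all add: L_def S_Suc_agree)
  have L_below: "L \<le> S n" for n
  proof (rule le_funI)
    fix i show "L i \<le> S n i"
      using lift_Suc_antimono_le[of S, OF S_Suc_le, of n "Suc i"] S_stable[of i n]
      by (cases "n \<le> Suc i") (auto simp: L_def le_fun_def)
  qed
  have "L \<in> M"
    using assms(1) S_in L_below S_stable unfolding limit_closed_def eventually_sequentially
    by (metis Suc_le_lessD image_subset_iff)
  moreover have "\<not> (\<exists>v\<in>M. v < L)"
  proof
    assume "\<exists>v\<in>M. v < L"
    then obtain v where "v \<in> M" "v \<le> L" "v \<noteq> L" by (auto simp: less_le)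
    then obtain i where i: "v i \<noteq> L i" and agree: "\<forall>k<i. v k = L k"
      using exists_least_iff[of "\<lambda>i. v i \<noteq> L i"] by auto
    \<comment> \<open>\<open>v\<close> was a candidate at stage \<open>i\<close>, where \<open>L i\<close> was chosen of least size.\<close>
    have "card (L i) \<le> card (v i)"
      unfolding L_def using S_least[OF \<open>v \<in> M\<close> order_trans[OF \<open>v \<le> L\<close> L_below]] agree S_stable
      by simp
    moreover have "v i \<subset> L i" using \<open>v \<le> L\<close> i by (auto simp: le_fun_def)
    ultimately show False using psubset_card_mono[of "L i" "v i"] by simp
  qed
  ultimately show ?thesis by blast
qed

section \<open>Profiles\<close>

definition first_occ :: "'a interp \<Rightarrow> 'a set \<Rightarrow> nat" where
  "first_occ v b = (LEAST k. v k = b)"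

definition occurs_before :: "'a interp \<Rightarrow> 'a set \<Rightarrow> 'a set \<Rightarrow> bool" where
  "occurs_before v a b \<longleftrightarrow> (\<exists>k. v k = a \<and> (\<forall>k'<k. v k' \<noteq> b))"

definition profile :: "'a interp \<Rightarrow> 'a set \<times> 'a set \<times> ('a set \<Rightarrow> 'a set \<Rightarrow> bool)" where
  "profile v = (v 0, v 1, occurs_before v)"

lemma first_occ_in:
  assumes "b \<in> range v"
  shows "v (first_occ v b) = b"
proof -
  from assms obtain k where "v k = b" by blast
  then show ?thesis unfolding first_occ_def by (rule LeastI)
qed

lemma first_occ_le: "v k = b \<Longrightarrow> first_occ v b \<le> k"
  unfolding first_occ_def by (rule Least_le)

lemma first_occ_less: "k < first_occ v b \<Longrightarrow> v k \<noteq> b"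
  unfolding first_occ_def by (rule not_less_Least)

lemma first_occ_eqI: "v p = b \<Longrightarrow> (\<And>k. k < p \<Longrightarrow> v k \<noteq> b) \<Longrightarrow> first_occ v b = p"
  unfolding first_occ_def by (rule Least_equality) (auto simp: not_less[symmetric])

lemma occurs_before_iff:
  "occurs_before v a b \<longleftrightarrow> a \<in> range v \<and> (b \<in> range v \<longrightarrow> first_occ v a \<le> first_occ v b)"
proof
  assume "occurs_before v a b"
  then obtain k where k: "v k = a" "\<forall>k'<k. v k' \<noteq> b" unfolding occurs_before_def by blast
  have "first_occ v a \<le> first_occ v b" if "b \<in> range v"
  proof -
    have "\<not> first_occ v b < k" using k(2) first_occ_in[OF that] by blast
    then show ?thesis using first_occ_le[of v k a] k(1) by linarith
  qed
  with k(1) show "a \<in> range v \<and> (b \<in> range v \<longrightarrow> first_occ v a \<le> first_occ v b)" by blast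
next
  assume a: "a \<in> range v \<and> (b \<in> range v \<longrightarrow> first_occ v a \<le> first_occ v b)"
  have "v k \<noteq> b" if "k < first_occ v a" for k
  proof
    assume "v k = b"
    then have "b \<in> range v" "first_occ v b \<le> k" by (auto simp: first_occ_le)
    with a that show False by simp
  qed
  with a show "occurs_before v a b"
    unfolding occurs_before_def by (intro exI[of _ "first_occ v a"]) (simp add: first_occ_in)
qed

lemma range_eq_if_profile_eq:
  assumes "profile u = profile v"
  shows "range u = range v"
proof -
  have "occurs_before u a a = occurs_before v a a" for a using assms by (simp add: profile_def)
  then show ?thesis by (auto simp: occurs_before_iff)
qed

lemma first_occ_less_iff_if_profile_eq:
  assumes "profile u = profile v" and "a \<in> range u" and "b \<in> range u"
  shows "first_occ u a < first_occ u b \<longleftrightarrow> first_occ v a < first_occ v b"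
proof -
  have "occurs_before u b a = occurs_before v b a" using assms(1) by (simp add: profile_def)
  with assms range_eq_if_profile_eq[OF assms(1)] show ?thesis
    by (simp add: occurs_before_iff not_le[symmetric])
qed

lemma profile_eq_if_first_occ_eq:
  assumes range: "range u = range v" and first: "\<And>b. b \<in> range u \<Longrightarrow> first_occ u b = first_occ v b"
  shows "profile u = profile v"
proof -
  have at: "u k = v k" if "first_occ u (u k) = k \<or> first_occ v (v k) = k" for k
  proof -
    have uk: "u k \<in> range v" and vk: "v k \<in> range u" using range by blast+
    show ?thesis
    proof (cases "first_occ u (u k) = k")
      case True
      then show ?thesis using first_occ_in[OF uk] first[of "u k"] by simp
    next
      case False
      then have "first_occ u (v k) = k" using that first[OF vk] by simp
      then show ?thesis using first_occ_in[OF vk] by simp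
    qed
  qed
  have "u 0 = v 0" using at[of 0] first_occ_le[of u 0] by simp
  moreover have "u 1 = v 1"
  proof -
    have "first_occ u (u 1) \<le> 1" "first_occ v (v 1) \<le> 1" by (simp_all add: first_occ_le)
    moreover have "u (first_occ u (u 1)) = u 1" "v (first_occ v (v 1)) = v 1"
      by (simp_all add: first_occ_in)
    ultimately show ?thesis using at[of 1] \<open>u 0 = v 0\<close> by (auto simp: le_Suc_eq)
  qed
  moreover have "occurs_before u = occurs_before v"
    using range first by (auto simp: occurs_before_iff fun_eq_iff)
  ultimately show ?thesis by (simp add: profile_def)
qed

lemma ltl_sat_propositional:
  "temp_depth \<psi> = 0 \<Longrightarrow> v i = w j \<Longrightarrow> ltl_sat v i \<psi> = ltl_sat w j \<psi>"
  by (induction \<psi>) auto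

lemma ex_until_iff_occurs_before:
  "(\<exists>j. B (v j) \<and> (\<forall>k<j. A (v k))) \<longleftrightarrow>
   (\<exists>a. B a \<and> occurs_before v a a \<and> (\<forall>b. b \<noteq> a \<longrightarrow> occurs_before v b a \<longrightarrow> A b))"
proof
  assume "\<exists>j. B (v j) \<and> (\<forall>k<j. A (v k))"
  then obtain j where j: "B (v j)" "\<forall>k<j. A (v k)" by blast
  have "A b" if "b \<noteq> v j" "occurs_before v b (v j)" for b
  proof -
    have "b \<in> range v" "first_occ v b \<le> j"
      using that(2) first_occ_le[of v j "v j"] by (auto simp: occurs_before_iff)
    moreover have "first_occ v b \<noteq> j" using first_occ_in[of b v] \<open>b \<in> range v\<close> that(1) by auto
    ultimately have "A (v (first_occ v b))" using j(2) by simp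
    then show ?thesis using first_occ_in[OF \<open>b \<in> range v\<close>] by simp
  qed
  moreover have "occurs_before v (v j) (v j)" by (simp add: occurs_before_iff)
  ultimately show "\<exists>a. B a \<and> occurs_before v a a \<and> (\<forall>b. b \<noteq> a \<longrightarrow> occurs_before v b a \<longrightarrow> A b)"
    using j(1) by blast
next
  assume "\<exists>a. B a \<and> occurs_before v a a \<and> (\<forall>b. b \<noteq> a \<longrightarrow> occurs_before v b a \<longrightarrow> A b)"
  then obtain a where a: "B a" "a \<in> range v" "\<forall>b. b \<noteq> a \<longrightarrow> occurs_before v b a \<longrightarrow> A b"
    by (auto simp: occurs_before_iff)
  have "A (v k)" if "k < first_occ v a" for k
  proof -
    have "first_occ v (v k) \<le> first_occ v a" using first_occ_le[of v k] that by simp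
    then have "occurs_before v (v k) a" using a(2) by (simp add: occurs_before_iff)
    then show ?thesis using a(3) first_occ_less[OF that] by blast
  qed
  then show "\<exists>j. B (v j) \<and> (\<forall>k<j. A (v k))"
    using a(1) first_occ_in[OF a(2)] by (intro exI[of _ "first_occ v a"]) auto
qed

lemma ltl_sat_Until_profile_eq:
  assumes "temp_depth \<psi>1 = 0" and "temp_depth \<psi>2 = 0" and "profile v = profile w"
  shows "ltl_sat v 0 (Until \<psi>1 \<psi>2) \<longleftrightarrow> ltl_sat w 0 (Until \<psi>1 \<psi>2)"
proof -
  define A B where "A a = ltl_sat (\<lambda>_. a) 0 \<psi>1" and "B a = ltl_sat (\<lambda>_. a) 0 \<psi>2" for a
  have "ltl_sat u k \<psi>1 = A (u k)" "ltl_sat u k \<psi>2 = B (u k)" for u k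
    unfolding A_def B_def using assms(1,2) by (simp_all add: ltl_sat_propositional[of _ u k "\<lambda>_. u k" 0])
  then have "ltl_sat u 0 (Until \<psi>1 \<psi>2) \<longleftrightarrow>
      (\<exists>a. B a \<and> occurs_before u a a \<and> (\<forall>b. b \<noteq> a \<longrightarrow> occurs_before u b a \<longrightarrow> A b))" for u
    using ex_until_iff_occurs_before[of B u A] by simp
  with assms(3) show ?thesis by (simp add: profile_def)
qed

lemma ltl_sat_Release_iff: "ltl_sat v i (Release \<psi>1 \<psi>2) \<longleftrightarrow> \<not> ltl_sat v i (Until (Neg \<psi>1) (Neg \<psi>2))"
  by (auto simp: Neg_def)

lemma ltl_sat_profile_eq:
  assumes "temp_depth \<phi> \<le> 1" and "profile v = profile w"
  shows "ltl_sat v 0 \<phi> \<longleftrightarrow> ltl_sat w 0 \<phi>"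
  using assms
proof (induction \<phi>)
  case (Next \<psi>)
  then show ?case using ltl_sat_propositional[of \<psi> v 1 w 1] by (simp add: profile_def)
next
  case (Until \<psi>1 \<psi>2)
  then show ?case using ltl_sat_Until_profile_eq[of \<psi>1 \<psi>2 v w] by simp
next
  case (Release \<psi>1 \<psi>2)
  then show ?case
    unfolding ltl_sat_Release_iff using ltl_sat_Until_profile_eq[of "Neg \<psi>1" "Neg \<psi>2" v w]
    by (simp add: Neg_def)
qed (auto simp: profile_def)

definition minimal_repeats :: "'a interp \<Rightarrow> bool" where
  "minimal_repeats u \<longleftrightarrow> (\<forall>j. first_occ u (u j) < j \<longrightarrow> (\<forall>k<j. \<not> u k \<subset> u j))"

lemma ex_minimal_earlier_occurrence:
  fixes v :: "'a::finite interp"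
  assumes "first_occ v (v j) < j"
  shows "\<exists>k<j. v k \<subseteq> v j \<and> (\<forall>k'<j. v k' \<subseteq> v j \<longrightarrow> \<not> v k' \<subset> v k)"
proof -
  define earlier where "earlier = {v k | k. k < j \<and> v k \<subseteq> v j}"
  have "v j \<in> earlier"
    unfolding earlier_def using assms by (intro CollectI exI[of _ "first_occ v (v j)"]) (simp add: first_occ_in)
  then obtain c where c: "c \<in> earlier" and c_min: "\<forall>c'\<in>earlier. c' \<le> c \<longrightarrow> c = c'"
    using finite_has_minimal[of earlier] by auto
  from c obtain k where "k < j" "v k = c" "v k \<subseteq> v j" unfolding earlier_def by blast
  moreover have "\<not> v k' \<subset> c" if "k' < j" "v k' \<subseteq> v j" for k'
    using c_min that unfolding earlier_def by blast
  ultimately show ?thesis by blast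
qed

lemma ex_minimal_repeats_below:
  fixes v :: "'a::finite interp"
  obtains u where "u \<le> v" and "minimal_repeats u" and "range u = range v"
    and "\<And>b. b \<in> range v \<Longrightarrow> first_occ u b = first_occ v b"
proof -
  define pick where "pick j = (SOME k. k < j \<and> v k \<subseteq> v j \<and> (\<forall>k'<j. v k' \<subseteq> v j \<longrightarrow> \<not> v k' \<subset> v k))"
    for j
  have pick: "pick j < j \<and> v (pick j) \<subseteq> v j \<and> (\<forall>k'<j. v k' \<subseteq> v j \<longrightarrow> \<not> v k' \<subset> v (pick j))"
    if "first_occ v (v j) \<noteq> j" for j
  proof -
    have "first_occ v (v j) < j" using that first_occ_le[of v j "v j"] by simp
    from someI_ex[OF ex_minimal_earlier_occurrence[OF this]] show ?thesis unfolding pick_def .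
  qed
  define u where "u j = (if first_occ v (v j) = j then v j else v (pick j))" for j
  have u_le: "u j \<subseteq> v j" for j using pick[of j] by (simp add: u_def)
  have u_from: "\<exists>k\<le>j. v k = u j" for j
  proof (cases "first_occ v (v j) = j")
    case False
    then show ?thesis using pick[OF False] by (intro exI[of _ "pick j"]) (simp add: u_def)
  qed (auto simp: u_def)
  have u_first: "first_occ v (v j) = j \<Longrightarrow> u j = v j" for j by (simp add: u_def)
  have u_min: "\<not> v k \<subset> u j" if "first_occ v (v j) \<noteq> j" "k < j" "v k \<subseteq> v j" for j k
    using pick[OF that(1)] that by (simp add: u_def)
  have u_at: "u (first_occ v b) = b" if "b \<in> range v" for b
    using u_first[of "first_occ v b"] first_occ_in[OF that] by simp
  have first_eq: "first_occ u b = first_occ v b" if "b \<in> range v" for b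
  proof (rule first_occ_eqI)
    show "u (first_occ v b) = b" using u_at[OF that] .
    show "u k \<noteq> b" if "k < first_occ v b" for k
      using u_from[of k] first_occ_less[of _ v b] that by fastforce
  qed
  have ranges: "range u = range v"
  proof
    show "range u \<subseteq> range v" using u_from by (metis image_subsetI rangeI)
    show "range v \<subseteq> range u"
    proof
      fix b assume "b \<in> range v"
      then show "b \<in> range u" using u_at[of b] by (metis rangeI)
    qed
  qed
  have minimal: "minimal_repeats u"
    unfolding minimal_repeats_def
  proof (intro allI impI notI)
    fix j k assume j: "first_occ u (u j) < j" and "k < j" and sub: "u k \<subset> u j"
    have "first_occ v (v j) \<noteq> j"
      using j u_first[of j] first_eq[of "v j"] by auto
    moreover obtain k' where "k' \<le> k" "v k' = u k" using u_from by blast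
    moreover have "v k' \<subseteq> v j" using \<open>v k' = u k\<close> sub u_le[of j] by auto
    ultimately show False using u_min[of j k'] \<open>k < j\<close> sub by simp
  qed
  have "u \<le> v" using u_le by (simp add: le_fun_def)
  from that[OF this minimal ranges first_eq] show thesis .
qed

text \<open>
  If \<open>a\<close> first occurs later in \<open>u'\<close> than in \<open>u\<close>, then \<open>c = u' (first_occ u a)\<close> is a proper subset of
  \<open>a\<close> occurring earlier. Among the letters \<open>d \<supset> c\<close> delayed in \<open>u'\<close>, the one first occurring latest in \<open>u\<close>
  leads to a position where \<open>u\<close> repeats a proper superset of \<open>c\<close>, against \<open>minimal_repeats u\<close>.
\<close>

lemma first_occ_le_if_below:
  fixes u :: "'a::finite interp"
  assumes min: "minimal_repeats u" and below: "u' \<le> u" and profile: "profile u' = profile u"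
    and a: "a \<in> range u"
  shows "first_occ u' a \<le> first_occ u a"
proof (rule ccontr)
  define J where "J = first_occ u a"
  assume "\<not> first_occ u' a \<le> first_occ u a"
  then have late: "J < first_occ u' a" by (simp add: J_def)
  define c where "c = u' J"
  have ranges: "range u' = range u" using range_eq_if_profile_eq[OF profile] .
  have c_range: "c \<in> range u" "c \<in> range u'" using ranges by (auto simp: c_def)
  have a': "a \<in> range u'" using a ranges by simp
  have "first_occ u' c < first_occ u' a"
    using late first_occ_le[of u' J c] by (simp add: c_def)
  then have c_early: "first_occ u c < J"
    using first_occ_less_iff_if_profile_eq[OF profile c_range(2) a'] by (simp add: J_def)
  have "c \<subset> a"
    using below first_occ_in[OF a] \<open>first_occ u' c < first_occ u' a\<close>
    by (auto simp: c_def J_def le_fun_def)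
  define E where "E = {d \<in> range u. J \<le> first_occ u d \<and> first_occ u d < first_occ u' d \<and> c \<subset> d}"
  have "a \<in> E" using a late \<open>c \<subset> a\<close> by (simp add: E_def J_def)
  then have "Max (first_occ u ` E) \<in> first_occ u ` E" by (intro Max_in) auto
  then obtain d where d: "d \<in> E" and d_Max: "first_occ u d = Max (first_occ u ` E)" by auto
  have d_max: "first_occ u e \<le> first_occ u d" if "e \<in> E" for e
    unfolding d_Max using that by (intro Max_ge) auto
  define p where "p = first_occ u' d"
  have "u' p = d" using d ranges first_occ_in[of d u'] by (simp add: E_def p_def)
  then have "c \<subset> u p" using d below by (auto simp: E_def le_fun_def)
  have "first_occ u d < p" using d by (simp add: E_def p_def)
  consider "first_occ u (u p) = p" | "first_occ u (u p) < p"
    using first_occ_le[of u p "u p"] by (cases "first_occ u (u p) = p") auto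
  then show False
  proof cases
    case 1
    have "first_occ u d < first_occ u (u p)" using 1 \<open>first_occ u d < p\<close> by simp
    then have "p < first_occ u' (u p)"
      using first_occ_less_iff_if_profile_eq[OF profile[symmetric]] d by (simp add: E_def p_def)
    then have "u p \<in> E"
      using 1 d \<open>first_occ u d < p\<close> \<open>c \<subset> u p\<close> by (auto simp: E_def)
    with d_max 1 \<open>first_occ u d < p\<close> show False by fastforce
  next
    case 2
    have "first_occ u c < p" using c_early d \<open>first_occ u d < p\<close> by (simp add: E_def)
    with min 2 \<open>c \<subset> u p\<close> first_occ_in[OF c_range(1)] show False
      unfolding minimal_repeats_def by metis
  qed
qed

lemma eq_if_below_same_first_occ:
  assumes min: "minimal_repeats u" and below: "u' \<le> u" and ranges: "range u' = range u"
    and first: "\<And>b. b \<in> range u \<Longrightarrow> first_occ u' b = first_occ u b"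
  shows "u' = u"
proof
  fix j
  define b where "b = u' j"
  have b: "b \<in> range u" "b \<subseteq> u j" using ranges below by (auto simp: b_def le_fun_def)
  show "u' j = u j"
  proof (cases "first_occ u (u j) = j")
    case True
    then show ?thesis using first[of "u j"] first_occ_in[of "u j" u'] ranges by auto
  next
    case False
    then have "first_occ u (u j) < j" using first_occ_le[of u j "u j"] by simp
    moreover have "first_occ u b \<le> j" using first[OF b(1)] first_occ_le[of u' j b] by (simp add: b_def)
    moreover have "first_occ u b \<noteq> j" using False first_occ_in[OF b(1)] by auto
    ultimately have "\<not> b \<subset> u j"
      using min first_occ_in[OF b(1)] unfolding minimal_repeats_def by (metis le_neq_implies_less)
    with b(2) show ?thesis by (simp add: b_def)
  qed
qed

lemma ex_profile_minimal_below:
  fixes w :: "'a::finite interp"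
  shows "\<exists>u\<le>w. profile u = profile w \<and> (\<forall>u'\<le>u. profile u' = profile u \<longrightarrow> u' = u)"
proof -
  \<comment> \<open>Minimal cost stops first occurrences from moving earlier, \<open>minimal_repeats\<close> from moving later.\<close>
  define cost where "cost v = (\<Sum>b\<in>range w. first_occ v b)" for v :: "'a interp"
  have "\<exists>us. (us \<le> w \<and> profile us = profile w) \<and>
      (\<forall>v. v \<le> w \<and> profile v = profile w \<longrightarrow> cost us \<le> cost v)"
    by (rule ex_has_least_nat[where k=w]) simp
  then obtain us where us: "us \<le> w" "profile us = profile w"
    and us_least: "\<And>v. v \<le> w \<Longrightarrow> profile v = profile w \<Longrightarrow> cost us \<le> cost v"
    by blast
  obtain u where u: "u \<le> us" "minimal_repeats u" "range u = range us"
    and first_u: "\<And>b. b \<in> range us \<Longrightarrow> first_occ u b = first_occ us b"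
    by (rule ex_minimal_repeats_below[where v=us]) blast
  have range_us: "range us = range w" using range_eq_if_profile_eq[OF us(2)] .
  have profile_u: "profile u = profile w"
    using profile_eq_if_first_occ_eq[of u us] u(3) first_u us(2) by simp
  have cost_u: "cost u = cost us"
    unfolding cost_def using first_u range_us by (intro sum.cong) auto
  have u_below: "u \<le> w" using order_trans[OF u(1) us(1)] .
  have "u' = u" if "u' \<le> u" "profile u' = profile u" for u'
  proof (rule eq_if_below_same_first_occ[OF u(2) that(1)])
    show ranges: "range u' = range u" using range_eq_if_profile_eq[OF that(2)] .
    have le: "\<forall>b\<in>range w. first_occ u' b \<le> first_occ u b"
      using first_occ_le_if_below[OF u(2) that] u(3) range_us by simp
    have "cost u \<le> cost u'"
      using cost_u us_least[OF order_trans[OF that(1) u_below]] that(2) profile_u by simp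
    moreover have "cost u' < cost u" if "\<exists>b\<in>range w. first_occ u' b < first_occ u b"
      unfolding cost_def using le that by (intro sum_strict_mono_ex1) simp_all
    ultimately have eq: "\<forall>b\<in>range w. first_occ u' b = first_occ u b"
      using le by (meson le_less not_le)
    show "first_occ u' b = first_occ u b" if "b \<in> range u" for b
      using bspec[OF eq] that u(3) range_us by simp
  qed
  with u_below profile_u show ?thesis by blast
qed

lemma ex_minimal_in_union_of_classes:
  fixes f :: "'b::order \<Rightarrow> 'c"
  assumes "finite A" and "f x \<in> A"
    and class_minimal: "\<And>x. \<exists>y\<le>x. f y = f x \<and> (\<forall>z\<le>y. f z = f y \<longrightarrow> z = y)"
  shows "\<exists>y\<le>x. f y \<in> A \<and> (\<forall>z<y. f z \<notin> A)"
  using assms(1,2)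
proof (induction A arbitrary: x rule: finite_psubset_induct)
  case (psubset A)
  obtain y0 where y0: "y0 \<le> x" "f y0 = f x" and y0_min: "\<And>z. z \<le> y0 \<Longrightarrow> f z = f y0 \<Longrightarrow> z = y0"
    using class_minimal[of x] by blast
  show ?case
  proof (cases "\<exists>z<y0. f z \<in> A")
    case False
    with y0 psubset.prems show ?thesis by auto
  next
    case True
    then obtain z1 where z1: "z1 < y0" "f z1 \<in> A" by blast
    have "f z1 \<noteq> f x"
    proof
      assume "f z1 = f x"
      then have "z1 = y0" using y0(2) y0_min[of z1] z1(1) by simp
      with z1(1) show False by simp
    qed
    with z1 psubset.IH[of "A - {f x}" z1] psubset.prems obtain y
      where y: "y \<le> z1" "f y \<in> A" "\<forall>z<y. f z \<notin> A - {f x}"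
      by blast
    have "f z \<notin> A" if "z < y" for z
    proof
      assume "f z \<in> A"
      moreover have "f z \<notin> A - {f x}" using y(3) that by simp
      ultimately have "f z = f y0" using y0(2) by simp
      moreover have "z < y0" using less_le_trans[OF that y(1)] z1(1) by (rule less_trans)
      ultimately show False using y0_min[of z] less_imp_le[of z y0] by blast
    qed
    moreover have "y \<le> x" using y(1) z1(1) y0(1) by (meson less_imp_le order_trans)
    ultimately show ?thesis using y(2) by blast
  qed
qed

section \<open>Minimal models\<close>

lemma strictly_below_iff_less: "strictly_below H T \<longleftrightarrow> H < T"
  by (simp add: strictly_below_def less_le le_fun_def)

lemma minimal_ltl_model_iff:
  "minimal_ltl_model T \<phi> \<longleftrightarrow> T \<in> {T. ltl_model T \<phi>} \<and> \<not> (\<exists>H\<in>{T. ltl_model T \<phi>}. H < T)"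
  by (auto simp: minimal_ltl_model_def strictly_below_iff_less)

lemma ex_minimal_ltl_model_THT1_XR:
  fixes \<phi> :: "'a::finite tform"
  assumes "\<phi> \<in> THT1_XR" and "ltl_satisfiable \<phi>"
  shows "\<exists>T. minimal_ltl_model T \<phi>"
proof -
  from assms(2) obtain T where "T \<in> {T. ltl_model T \<phi>}" by (auto simp: ltl_satisfiable_def)
  then obtain u where "u \<in> {T. ltl_model T \<phi>}" "\<not> (\<exists>v\<in>{T. ltl_model T \<phi>}. v < u)"
    using ex_minimal_if_limit_closed[OF limit_closed_models_THT1_XR[OF assms(1)]] by blast
  then have "minimal_ltl_model u \<phi>" unfolding minimal_ltl_model_iff by blast
  then show ?thesis by blast
qed

lemma ex_minimal_ltl_model_THT_1:
  fixes \<phi> :: "'a::finite tform"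
  assumes "\<phi> \<in> THT_1" and "ltl_satisfiable \<phi>"
  shows "\<exists>T. minimal_ltl_model T \<phi>"
proof -
  from assms(2) obtain T where T: "ltl_model T \<phi>" by (auto simp: ltl_satisfiable_def)
  have invariant: "ltl_model u \<phi> \<longleftrightarrow> ltl_model v \<phi>" if "profile u = profile v" for u v
    using ltl_sat_profile_eq[of \<phi> u v] assms(1) that by (simp add: THT_1_def ltl_model_def)
  have "finite (profile ` {T. ltl_model T \<phi>})" by simp
  moreover have "profile T \<in> profile ` {T. ltl_model T \<phi>}" using T by blast
  ultimately obtain u where u: "profile u \<in> profile ` {T. ltl_model T \<phi>}"
    and u_min: "\<forall>v<u. profile v \<notin> profile ` {T. ltl_model T \<phi>}"
    using ex_minimal_in_union_of_classes[OF _ _ ex_profile_minimal_below] by blast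
  have "ltl_model u \<phi>" using u invariant by blast
  moreover have "\<not> (\<exists>v\<in>{T. ltl_model T \<phi>}. v < u)" using u_min by blast
  ultimately have "minimal_ltl_model u \<phi>" unfolding minimal_ltl_model_iff by blast
  then show ?thesis by blast
qed

theorem mainTheorem10:
  fixes dummy :: "'a::finite"
  shows "(\<forall>\<phi>::'a tform. \<phi> \<in> THT1_XR \<and> ltl_satisfiable \<phi> \<longrightarrow> (\<exists>T. minimal_ltl_model T \<phi>))
       \<and> (\<forall>\<phi>::'a tform. \<phi> \<in> THT_1 \<and> ltl_satisfiable \<phi> \<longrightarrow> (\<exists>T. minimal_ltl_model T \<phi>))"
  using ex_minimal_ltl_model_THT1_XR ex_minimal_ltl_model_THT_1 by blast

end
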